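(* For any $n\in\mathbb{N}$ with $n\geq2$, the free monoid of rank $2^{n-1}$ embeds into $\mathrm{lps}_n$.
   Context: Let $\mathcal{A}_n=\{1<2<\cdots<n\}$. An lPS tableau is a finite (possibly empty) sequence of nonempty bottom-justified columns of boxes filled with positive integers, such that the entries of each column are strictly decreasing from top to bottom and the bottom entries of the columns form a weakly increasing sequence from left to right. Right insertion of a symbol $a$ into an lPS tableau $B$: if $a$ is greater than or equal to every entry of the bottom row, append a new column consisting of $a$ at the right end; otherwise, let $z$ be the leftmost bottom-row entry with $z>a$ and put $a$ in a new box at the bottom of the column of $z$ (the previous entries of that column move up one box). For $w=w_1\cdots w_k$, $\mathfrak{R}_\ell(w)$ is obtained by starting with the empty tableau and right-inserting $w_1,\dots,w_k$ in order. The monoid $\mathrm{lps}_n$ is the quotient of the free monoid $\mathcal{A}_n^*$ by the congruence $u\equiv v\iff\mathfrak{R}_\ell(u)=\mathfrak{R}_\ell(v)$. *)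

theory Defs
  imports Main
begin

text \<open>An lPS tableau is represented as a list of columns (left to right);
each column is a nonempty list of entries listed from BOTTOM to TOP,
so the bottom entry of a column c is hd c.\<close>

type_synonym tableau = "nat list list"

fun lps_rinsert :: "tableau \<Rightarrow> nat \<Rightarrow> tableau" where
  "lps_rinsert [] a = [[a]]"
| "lps_rinsert (c # cs) a =
     (if a < hd c then (a # c) # cs else c # lps_rinsert cs a)"

definition lps_R :: "nat list \<Rightarrow> tableau" where
  "lps_R w = foldl lps_rinsert [] w"

definition lps_equiv :: "nat \<Rightarrow> nat list \<Rightarrow> nat list \<Rightarrow> bool" where
  "lps_equiv n u v \<longleftrightarrow> u \<in> lists {1..n} \<and> v \<in> lists {1..n} \<and> lps_R u = lps_R v"

text \<open>A monoid embedding of the free monoid on k generators (words over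
{0..<k}) into lps_n, with elements of lps_n represented by words over A_n
modulo lps_equiv: a map f that is a homomorphism modulo the congruence
and injective modulo the congruence.\<close>
definition free_monoid_embeds_lps :: "nat \<Rightarrow> nat \<Rightarrow> bool" where
  "free_monoid_embeds_lps k n \<longleftrightarrow>
     (\<exists>f :: nat list \<Rightarrow> nat list.
        (\<forall>u \<in> lists {0..<k}. f u \<in> lists {1..n}) \<and>
        lps_equiv n (f []) [] \<and>
        (\<forall>u \<in> lists {0..<k}. \<forall>v \<in> lists {0..<k}. lps_equiv n (f (u @ v)) (f u @ f v)) \<and>
        (\<forall>u \<in> lists {0..<k}. \<forall>v \<in> lists {0..<k}. lps_equiv n (f u) (f v) \<longrightarrow> u = v))"

end

theory Submission
  imports Defs
begin

text \<open>Every generator is sent to the column reading (top to bottom) of a column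
with bottom entry 1 and remaining entries a subset of {2..n}; there are
2^(n-1) such columns. Reading a tableau column by column, each column from
top to bottom, and right-inserting the symbols rebuilds exactly that tableau,
because the bottom entries increase weakly. Hence the tableau of the image of
a word is the word of columns itself, and distinct words give distinct
tableaux.\<close>

lemma lps_rinsert_append_left:
  assumes "\<forall>c\<in>set T. hd c \<le> a"
  shows "lps_rinsert (T @ X) a = T @ lps_rinsert X a"
  using assms by (induction T) auto

lemma foldl_lps_rinsert_rev_column:
  assumes "sorted_wrt (<) c" "c \<noteq> []" "\<forall>d\<in>set T. hd d \<le> hd c"
  shows "foldl lps_rinsert T (rev c) = T @ [c]"
  using assms
proof (induction c)
  case Nil
  then show ?case by simp
next
  case (Cons x c)
  show ?case
  proof (cases "c = []")
    case True
    then show ?thesis using Cons.prems lps_rinsert_append_left[of T x "[]"] by simp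
  next
    case False
    have x_below: "x < hd c" using Cons.prems False by (cases c) auto
    have "\<forall>d\<in>set T. hd d \<le> hd c" using Cons.prems x_below by force
    then have "foldl lps_rinsert T (rev c) = T @ [c]"
      using Cons.IH Cons.prems False by simp
    then have "foldl lps_rinsert T (rev (x # c)) = lps_rinsert (T @ [c]) x" by simp
    also have "\<dots> = T @ [x # c]"
      using Cons.prems x_below by (simp add: lps_rinsert_append_left)
    finally show ?thesis .
  qed
qed

lemma lps_R_column_reading:
  assumes "\<forall>c\<in>set cs. c \<noteq> [] \<and> sorted_wrt (<) c" "sorted (map hd cs)"
  shows "lps_R (concat (map rev cs)) = cs"
  using assms
proof (induction cs rule: rev_induct)
  case Nil
  then show ?case by (simp add: lps_R_def)
next
  case (snoc c cs)
  have "lps_R (concat (map rev (cs @ [c]))) = foldl lps_rinsert cs (rev c)"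
    using snoc by (simp add: lps_R_def sorted_append)
  also have "\<dots> = cs @ [c]"
    using snoc.prems by (intro foldl_lps_rinsert_rev_column) (auto simp: sorted_append)
  finally show ?case .
qed

definition bit_column :: "nat \<Rightarrow> nat \<Rightarrow> nat list" where
  "bit_column m i = 1 # map (\<lambda>k. k + 2) (filter (bit i) [0..<m])"

lemma bit_column_sorted: "sorted_wrt (<) (bit_column m i)"
  unfolding bit_column_def by (auto simp: sorted_wrt_map sorted_wrt_filter)

lemma set_bit_column: "set (bit_column m i) \<subseteq> {1..m + 1}"
  unfolding bit_column_def by auto

lemma bit_column_inj_on: "inj_on (bit_column m) {0..<2 ^ m}"
proof (rule inj_onI)
  fix i j :: nat
  assume i: "i \<in> {0..<2 ^ m}" and j: "j \<in> {0..<2 ^ m}"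
    and eq: "bit_column m i = bit_column m j"
  have "filter (bit i) [0..<m] = filter (bit j) [0..<m]"
    using eq by (simp add: bit_column_def inj_map_eq_map inj_on_def)
  then have low: "bit i k = bit j k" if "k < m" for k
    using that by (metis (mono_tags) atLeastLessThan_iff le0 mem_Collect_eq set_filter set_upt)
  have "bit i k = bit j k" for k
  proof (cases "k < m")
    case False
    then have "\<not> bit i k" "\<not> bit j k"
      using i j by (metis atLeastLessThan_iff bit_take_bit_iff take_bit_nat_eq_self)+
    then show ?thesis by simp
  qed (rule low)
  then show "i = j" by (simp add: bit_eq_iff)
qed

definition column_word :: "nat \<Rightarrow> nat list \<Rightarrow> nat list" where
  "column_word m u = concat (map (rev \<circ> bit_column m) u)"

lemma lps_R_column_word: "lps_R (column_word m u) = map (bit_column m) u"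
proof -
  have "sorted (map hd (map (bit_column m) u))"
    by (simp add: bit_column_def sorted_iff_nth_mono)
  then show ?thesis
    using lps_R_column_reading[of "map (bit_column m) u"] bit_column_sorted
    by (simp add: column_word_def bit_column_def)
qed

lemma column_word_in_lists: "column_word m u \<in> lists {1..m + 1}"
  using set_bit_column unfolding column_word_def by fastforce

theorem proposition4p1:
  fixes n :: nat
  assumes "n \<ge> 2"
  shows "free_monoid_embeds_lps (2 ^ (n - 1)) n"
  unfolding free_monoid_embeds_lps_def
proof (intro exI[of _ "column_word (n - 1)"] conjI ballI impI)
  have words: "column_word (n - 1) u \<in> lists {1..n}" for u
    using column_word_in_lists[of "n - 1" u] assms by simp
  then show "column_word (n - 1) u \<in> lists {1..n}" for u .
  show "lps_equiv n (column_word (n - 1) []) []"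
    by (simp add: lps_equiv_def column_word_def)
  show "lps_equiv n (column_word (n - 1) (u @ v)) (column_word (n - 1) u @ column_word (n - 1) v)"
    for u v using words[of "u @ v"] by (simp add: lps_equiv_def column_word_def)
  fix u v
  assume "u \<in> lists {0..<2 ^ (n - 1)}" "v \<in> lists {0..<2 ^ (n - 1)}"
    and "lps_equiv n (column_word (n - 1) u) (column_word (n - 1) v)"
  then have "map (bit_column (n - 1)) u = map (bit_column (n - 1)) v"
    and "inj_on (bit_column (n - 1)) (set u \<union> set v)"
    by (auto simp: lps_equiv_def lps_R_column_word intro: inj_on_subset[OF bit_column_inj_on])
  then show "u = v" using inj_on_map_eq_map by blast
qed

end
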